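(* Let $f \in \mathbb{N}_0[x^{\pm 1}]$ satisfy $f(1) > 3$ and $|\operatorname{supp}(f)| > 1$. Then $f$ can be written as $f = g + h$ with $g, h$ irreducible elements of $\mathbb{N}_0[x^{\pm 1}]$.
   Context: $\mathbb{N}_0[x^{\pm 1}]$ denotes the semiring of Laurent polynomials in $x$ with nonnegative integer coefficients, under the usual addition and multiplication. For $f = \sum_i c_i x^{k_i}$ with all $c_i$ positive integers and the $k_i$ distinct integers, $\operatorname{supp}(f) = \{k_i\}$ is the set of exponents appearing in $f$, and $f(1)=\sum_i c_i$. The units of $\mathbb{N}_0[x^{\pm 1}]$ are exactly the monomials $x^k$, $k \in \mathbb{Z}$. An element $f$ is irreducible if it is nonzero, not a unit, and whenever $f = gh$ with $g,h \in \mathbb{N}_0[x^{\pm 1}]$, one of $g,h$ is a unit. *)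

theory Defs
  imports "HOL-Library.Poly_Mapping" "HOL-Computational_Algebra.Factorial_Ring"
begin

(* N_0[x^{+-1}] is modelled as int =>0 nat: finitely supported maps from exponents
 to coefficients; the semiring multiplication of poly_mapping is convolution
 (exponents add), so this is exactly the Laurent polynomial semiring.
 supp f = keys f, and f(1) is the sum of all coefficients. *)

type_synonym laurent_nat = "int \<Rightarrow>\<^sub>0 nat"

definition eval_one :: "laurent_nat \<Rightarrow> nat" where
  "eval_one f = (\<Sum>k\<in>Poly_Mapping.keys f. Poly_Mapping.lookup f k)"

end

(*
  Irreducibility is certified by a corner argument. If g = u v with u, v non-units and g has a
  coefficient 1, then u and v each have at least two terms, and with i < j, k < l the extreme
  exponents of u and v, the exponents i + l and j + k of g are symmetric about the centre of its
  support [i + k, j + l]. They are either distinct, or equal with coefficient at least 2 there.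
  Hence g is irreducible if it has a coefficient 1, at least two terms, and all exponents except
  one extreme exponent a lie in the half of the support away from a, the centre carrying
  coefficient at most 1. Also 2 x^t is irreducible because 2 is.

  For f with extreme exponents m < M and f(1) >= 4, a case analysis on the mass of f at the ends,
  at the centre and in the two open halves of [m, M] splits f into two summands of these shapes.
*)

theory Submission
  imports Defs "HOL-Computational_Algebra.Primes"
begin

section \<open>Products and units\<close>

lemma lookup_times_eq_sum:
  fixes u v :: "'a::monoid_add \<Rightarrow>\<^sub>0 'b::semiring_0"
  shows "Poly_Mapping.lookup (u * v) x =
    (\<Sum>(a, b) \<in> Poly_Mapping.keys u \<times> Poly_Mapping.keys v.
      if a + b = x then Poly_Mapping.lookup u a * Poly_Mapping.lookup v b else 0)"
proof -
  have "Poly_Mapping.lookup (u * v) x = prod_fun (Poly_Mapping.lookup u) (Poly_Mapping.lookup v) x"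
    by (simp add: times_poly_mapping.rep_eq)
  also have "\<dots> = (\<Sum>(a, b). Poly_Mapping.lookup u a * Poly_Mapping.lookup v b when x = a + b)"
    by (rule prod_fun_unfold_prod) auto
  also have "\<dots> = (\<Sum>(a, b) \<in> Poly_Mapping.keys u \<times> Poly_Mapping.keys v.
      Poly_Mapping.lookup u a * Poly_Mapping.lookup v b when x = a + b)"
    by (rule Sum_any.expand_superset) (auto simp: in_keys_iff when_def split: if_splits)
  finally show ?thesis
    by (simp add: when_def eq_commute)
qed

lemma sum_le_lookup_times:
  fixes u v :: "'a::monoid_add \<Rightarrow>\<^sub>0 nat"
  assumes "finite P" and "\<And>a b. (a, b) \<in> P \<Longrightarrow> a + b = x"
  shows "(\<Sum>(a, b) \<in> P. Poly_Mapping.lookup u a * Poly_Mapping.lookup v b)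
    \<le> Poly_Mapping.lookup (u * v) x"
proof -
  let ?t = "\<lambda>(a, b). if a + b = x then Poly_Mapping.lookup u a * Poly_Mapping.lookup v b else 0"
  have "(\<Sum>(a, b) \<in> P. Poly_Mapping.lookup u a * Poly_Mapping.lookup v b) = sum ?t P"
    using assms(2) by (intro sum.cong) auto
  also have "\<dots> = sum ?t (P \<inter> Poly_Mapping.keys u \<times> Poly_Mapping.keys v)"
    using assms(1) by (intro sum.mono_neutral_right) (auto simp: in_keys_iff split: if_splits)
  also have "\<dots> \<le> sum ?t (Poly_Mapping.keys u \<times> Poly_Mapping.keys v)"
    by (rule sum_mono2) auto
  finally show ?thesis
    by (simp add: lookup_times_eq_sum)
qed

lemma in_keys_times:
  fixes u v :: "'a::monoid_add \<Rightarrow>\<^sub>0 nat"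
  assumes "a \<in> Poly_Mapping.keys u" and "b \<in> Poly_Mapping.keys v"
  shows "a + b \<in> Poly_Mapping.keys (u * v)"
proof -
  have "0 < Poly_Mapping.lookup u a * Poly_Mapping.lookup v b"
    using assms by (simp add: in_keys_iff)
  also have "\<dots> \<le> Poly_Mapping.lookup (u * v) (a + b)"
    using sum_le_lookup_times[of "{(a, b)}" "a + b" u v] by simp
  finally show ?thesis by (simp add: in_keys_iff)
qed

lemma lookup_single_times_dvd:
  fixes w :: "'a::monoid_add \<Rightarrow>\<^sub>0 'b::comm_semiring_1"
  shows "c dvd Poly_Mapping.lookup (Poly_Mapping.single t c * w) x"
  unfolding lookup_times_eq_sum
  by (rule dvd_sum) (auto simp: lookup_single split: if_splits)

lemma keys_eq_singleton_imp_single: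
  assumes "Poly_Mapping.keys w = {t}"
  shows "w = Poly_Mapping.single t (Poly_Mapping.lookup w t)"
  by (rule poly_mapping_eqI) (use assms in \<open>auto simp: lookup_single when_def in_keys_iff\<close>)

lemma single_one_dvd_one:
  "(Poly_Mapping.single t 1 :: 'a::ab_group_add \<Rightarrow>\<^sub>0 'b::comm_semiring_1) dvd 1"
proof
  show "1 = Poly_Mapping.single t (1::'b) * Poly_Mapping.single (- t) 1"
    by (simp add: mult_single)
qed

lemma keys_times_eq_singletonE:
  fixes u v :: "'a::cancel_comm_monoid_add \<Rightarrow>\<^sub>0 nat"
  assumes "Poly_Mapping.keys (u * v) = {t}"
  obtains a where "Poly_Mapping.keys u = {a}"
proof -
  have "v \<noteq> 0" using assms by auto
  then obtain k where k: "k \<in> Poly_Mapping.keys v"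
    by (metis all_not_in_conv keys_eq_empty)
  have "x + k = t" if "x \<in> Poly_Mapping.keys u" for x
    using in_keys_times[OF that k] assms by auto
  then have "Poly_Mapping.keys u \<subseteq> {x. x + k = t}" by auto
  moreover have "Poly_Mapping.keys u \<noteq> {}" using assms by auto
  moreover have "x = y" if "x + k = t" "y + k = t" for x y
    using that by (metis add_right_cancel)
  ultimately show ?thesis
    using that by blast
qed

lemma not_dvd_one_if_two_keys:
  fixes w :: "'a::cancel_comm_monoid_add \<Rightarrow>\<^sub>0 nat"
  assumes "x \<in> Poly_Mapping.keys w" "y \<in> Poly_Mapping.keys w" "x \<noteq> y"
  shows "\<not> w dvd 1"
proof
  assume "w dvd 1"
  then obtain w' where "1 = w * w'" by (auto elim: dvdE)
  then have "Poly_Mapping.keys (w * w') = {0}" by simp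
  then obtain a where "Poly_Mapping.keys w = {a}" by (rule keys_times_eq_singletonE)
  with assms show False by auto
qed

lemma Min_less_Max_keys_if_not_dvd_one:
  fixes w w' :: "'a::{linorder, ab_group_add} \<Rightarrow>\<^sub>0 nat"
  assumes "Poly_Mapping.lookup (w * w') x = 1" and "\<not> w dvd 1"
  shows "Min (Poly_Mapping.keys w) < Max (Poly_Mapping.keys w)"
proof (rule ccontr)
  define t where "t = Min (Poly_Mapping.keys w)"
  assume "\<not> ?thesis"
  then have "Max (Poly_Mapping.keys w) \<le> t" by (simp add: t_def)
  moreover have "w \<noteq> 0" using assms(1) by auto
  ultimately have "Poly_Mapping.keys w = {t}"
    unfolding t_def by (auto intro: antisym Min_in simp: Min_le order.trans[OF Max_ge])
  then have w: "w = Poly_Mapping.single t (Poly_Mapping.lookup w t)"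
    by (rule keys_eq_singleton_imp_single)
  have "Poly_Mapping.lookup w t dvd 1"
    using lookup_single_times_dvd[of "Poly_Mapping.lookup w t" t w' x] assms(1) w by simp
  with w have "w = Poly_Mapping.single t 1" by simp
  with assms(2) single_one_dvd_one show False by metis
qed

lemma irreducible_single:
  fixes p :: nat
  assumes "irreducible p"
  shows "irreducible (Poly_Mapping.single t p :: 'a::ab_group_add \<Rightarrow>\<^sub>0 nat)"
proof (rule irreducibleI)
  have p: "p \<noteq> 0"
    using assms by (metis not_irreducible_zero)
  then show "Poly_Mapping.single t p \<noteq> 0"
    by (metis lookup_single_eq lookup_zero)
  show "\<not> Poly_Mapping.single t p dvd 1"
  proof
    assume "Poly_Mapping.single t p dvd 1"
    then obtain w where "1 = Poly_Mapping.single t p * w" by (auto elim: dvdE)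
    then have "p dvd 1" using lookup_single_times_dvd[of p t w 0] by simp
    with assms show False by (metis irreducible_not_unit)
  qed
  fix u v assume uv: "Poly_Mapping.single t p = u * v"
  then have "Poly_Mapping.keys (u * v) = {t}" "Poly_Mapping.keys (v * u) = {t}"
    using p by (simp_all add: mult.commute[of v u] flip: uv)
  then obtain a b where "Poly_Mapping.keys u = {a}" "Poly_Mapping.keys v = {b}"
    by (metis keys_times_eq_singletonE)
  then have u: "u = Poly_Mapping.single a (Poly_Mapping.lookup u a)"
    and v: "v = Poly_Mapping.single b (Poly_Mapping.lookup v b)"
    by (simp_all add: keys_eq_singleton_imp_single)
  have "Poly_Mapping.single t p =
      Poly_Mapping.single (a + b) (Poly_Mapping.lookup u a * Poly_Mapping.lookup v b)"
    using uv u v by (metis mult_single)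
  then have "Poly_Mapping.lookup (Poly_Mapping.single t p) t =
      Poly_Mapping.lookup
        (Poly_Mapping.single (a + b) (Poly_Mapping.lookup u a * Poly_Mapping.lookup v b)) t"
    by simp
  then have "p = Poly_Mapping.lookup u a * Poly_Mapping.lookup v b"
    using p by (auto simp: lookup_single when_def split: if_splits)
  then have "Poly_Mapping.lookup u a = 1 \<or> Poly_Mapping.lookup v b = 1"
    using irreducibleD[OF assms] by auto
  then show "u dvd 1 \<or> v dvd 1"
    using u v single_one_dvd_one by metis
qed

lemma keys_times_between:
  fixes u v :: "'a::{ordered_comm_monoid_add, linorder} \<Rightarrow>\<^sub>0 nat"
  assumes "e \<in> Poly_Mapping.keys (u * v)"
  shows "Min (Poly_Mapping.keys u) + Min (Poly_Mapping.keys v) \<le> e"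
    and "e \<le> Max (Poly_Mapping.keys u) + Max (Poly_Mapping.keys v)"
proof -
  obtain a b where "e = a + b" "a \<in> Poly_Mapping.keys u" "b \<in> Poly_Mapping.keys v"
    using keys_mult[of u v] assms by blast
  then show "Min (Poly_Mapping.keys u) + Min (Poly_Mapping.keys v) \<le> e"
    and "e \<le> Max (Poly_Mapping.keys u) + Max (Poly_Mapping.keys v)"
    by (simp_all add: add_mono)
qed

lemma two_le_lookup_times:
  fixes u v :: "'a::monoid_add \<Rightarrow>\<^sub>0 nat"
  assumes "i \<in> Poly_Mapping.keys u" "j \<in> Poly_Mapping.keys u" "i \<noteq> j"
    and "l \<in> Poly_Mapping.keys v" "k \<in> Poly_Mapping.keys v" "i + l = j + k"
  shows "2 \<le> Poly_Mapping.lookup (u * v) (i + l)"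
proof -
  have "(\<Sum>(a, b) \<in> {(i, l), (j, k)}. Poly_Mapping.lookup u a * Poly_Mapping.lookup v b)
      \<le> Poly_Mapping.lookup (u * v) (i + l)"
    by (rule sum_le_lookup_times) (use assms(6) in auto)
  then have "Poly_Mapping.lookup u i * Poly_Mapping.lookup v l
      + Poly_Mapping.lookup u j * Poly_Mapping.lookup v k \<le> Poly_Mapping.lookup (u * v) (i + l)"
    using assms(3) by simp
  moreover have "1 \<le> Poly_Mapping.lookup u i * Poly_Mapping.lookup v l"
    "1 \<le> Poly_Mapping.lookup u j * Poly_Mapping.lookup v k"
    using assms(1,2,4,5) by (simp_all add: in_keys_iff Suc_le_eq)
  ultimately show ?thesis
    by linarith
qed

section \<open>Irreducibility criteria\<close>

lemma irreducibleI_corner_pairs: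
  fixes g :: "'a::linordered_ab_group_add \<Rightarrow>\<^sub>0 nat"
  assumes coeff_one: "Poly_Mapping.lookup g x = 1"
    and two_keys: "y \<in> Poly_Mapping.keys g" "z \<in> Poly_Mapping.keys g" "y \<noteq> z"
    and corner_pairs: "\<And>p q r s. p \<in> Poly_Mapping.keys g \<Longrightarrow> q \<in> Poly_Mapping.keys g \<Longrightarrow>
      r \<in> Poly_Mapping.keys g \<Longrightarrow> s \<in> Poly_Mapping.keys g \<Longrightarrow>
      (\<forall>e \<in> Poly_Mapping.keys g. p \<le> e \<and> e \<le> s) \<Longrightarrow>
      p < q \<Longrightarrow> p < r \<Longrightarrow> q < s \<Longrightarrow> r < s \<Longrightarrow> q + r = p + s \<Longrightarrow>
      q = r \<and> Poly_Mapping.lookup g q = 1"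
  shows "irreducible g"
proof (rule irreducibleI)
  show "g \<noteq> 0"
    using coeff_one by auto
  show "\<not> g dvd 1"
    using two_keys by (rule not_dvd_one_if_two_keys)
  fix u v assume g: "g = u * v"
  show "u dvd 1 \<or> v dvd 1"
  proof (rule ccontr)
    assume non_units: "\<not> (u dvd 1 \<or> v dvd 1)"
    define i j k l where "i = Min (Poly_Mapping.keys u)" and "j = Max (Poly_Mapping.keys u)"
      and "k = Min (Poly_Mapping.keys v)" and "l = Max (Poly_Mapping.keys v)"
    have "i < j"
      using Min_less_Max_keys_if_not_dvd_one[of u v x] coeff_one g non_units
      by (simp add: i_def j_def)
    have "k < l"
      using Min_less_Max_keys_if_not_dvd_one[of v u x] coeff_one g non_units
      by (simp add: k_def l_def mult.commute)
    have "u \<noteq> 0" "v \<noteq> 0"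
      using g coeff_one by auto
    then have ends: "i \<in> Poly_Mapping.keys u" "j \<in> Poly_Mapping.keys u"
      "k \<in> Poly_Mapping.keys v" "l \<in> Poly_Mapping.keys v"
      by (simp_all add: i_def j_def k_def l_def)
    have bounds: "\<forall>e \<in> Poly_Mapping.keys g. i + k \<le> e \<and> e \<le> j + l"
      unfolding g i_def j_def k_def l_def using keys_times_between by blast
    have corners: "i + k \<in> Poly_Mapping.keys g" "i + l \<in> Poly_Mapping.keys g"
      "j + k \<in> Poly_Mapping.keys g" "j + l \<in> Poly_Mapping.keys g"
      using in_keys_times[OF ends(1) ends(3)] in_keys_times[OF ends(1) ends(4)]
        in_keys_times[OF ends(2) ends(3)] in_keys_times[OF ends(2) ends(4)]
      unfolding g .
    have "i + k < i + l" "i + k < j + k" "i + l < j + l" "j + k < j + l"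
      using \<open>i < j\<close> \<open>k < l\<close> by simp_all
    moreover have "i + l + (j + k) = i + k + (j + l)"
      by (simp add: ac_simps)
    ultimately have centre: "i + l = j + k \<and> Poly_Mapping.lookup g (i + l) = 1"
      by (rule corner_pairs[OF corners bounds])
    have "2 \<le> Poly_Mapping.lookup g (i + l)"
      unfolding g
      by (rule two_le_lookup_times[OF ends(1,2) _ ends(4,3)]) (use centre \<open>i < j\<close> in auto)
    with centre show False
      by linarith
  qed
qed

definition upper_clustered :: "(int \<Rightarrow> nat) \<Rightarrow> int \<Rightarrow> bool" where
  "upper_clustered \<psi> a \<longleftrightarrow> \<psi> a \<noteq> 0 \<and>
    (\<forall>e e'. \<psi> e \<noteq> 0 \<longrightarrow> \<psi> e' \<noteq> 0 \<longrightarrow> e \<noteq> a \<longrightarrow> e' \<noteq> a \<longrightarrow>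
      a + e' \<le> 2 * e \<and> (a + e' = 2 * e \<longrightarrow> \<psi> e = 1))"

definition lower_clustered :: "(int \<Rightarrow> nat) \<Rightarrow> int \<Rightarrow> bool" where
  "lower_clustered \<psi> a \<longleftrightarrow> \<psi> a \<noteq> 0 \<and>
    (\<forall>e e'. \<psi> e \<noteq> 0 \<longrightarrow> \<psi> e' \<noteq> 0 \<longrightarrow> e \<noteq> a \<longrightarrow> e' \<noteq> a \<longrightarrow>
      2 * e \<le> a + e' \<and> (2 * e = a + e' \<longrightarrow> \<psi> e = 1))"

lemma upper_clustered_corner_pairs:
  assumes "upper_clustered \<psi> a"
    and "\<psi> p \<noteq> 0" "\<psi> q \<noteq> 0" "\<psi> r \<noteq> 0" "\<psi> s \<noteq> 0" and "\<And>e. \<psi> e \<noteq> 0 \<Longrightarrow> p \<le> e"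
    and "p < q" "p < r" "q + r = p + s"
  shows "q = r \<and> \<psi> q = 1"
proof -
  note clustered = assms(1)[unfolded upper_clustered_def]
  have "p = a"
    using clustered assms(2) assms(6)[of a] by force
  then have "a + s \<le> 2 * q" "a + s \<le> 2 * r" "a + s = 2 * q \<longrightarrow> \<psi> q = 1"
    using clustered assms(2-5,7-9) by auto
  then show ?thesis
    using \<open>p = a\<close> assms(9) by auto
qed

lemma lower_clustered_corner_pairs:
  assumes "lower_clustered \<psi> a"
    and "\<psi> p \<noteq> 0" "\<psi> q \<noteq> 0" "\<psi> r \<noteq> 0" "\<psi> s \<noteq> 0" and "\<And>e. \<psi> e \<noteq> 0 \<Longrightarrow> e \<le> s"
    and "q < s" "r < s" "q + r = p + s"
  shows "q = r \<and> \<psi> q = 1"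
proof -
  note clustered = assms(1)[unfolded lower_clustered_def]
  have "s = a"
    using clustered assms(5) assms(6)[of a] by force
  then have "2 * q \<le> a + p" "2 * r \<le> a + p" "2 * q = a + p \<longrightarrow> \<psi> q = 1"
    using clustered assms(2-5,7-9) by auto
  then show ?thesis
    using \<open>s = a\<close> assms(9) by auto
qed

definition certified_irreducible :: "(int \<Rightarrow> nat) \<Rightarrow> bool" where
  "certified_irreducible \<psi> \<longleftrightarrow>
    (\<exists>x. \<psi> x = 1) \<and> (\<exists>y z. y \<noteq> z \<and> \<psi> y \<noteq> 0 \<and> \<psi> z \<noteq> 0) \<and>
      (\<exists>a. upper_clustered \<psi> a \<or> lower_clustered \<psi> a)
    \<or> (\<exists>t. \<psi> = (\<lambda>e. if e = t then 2 else 0))"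

lemma certified_irreducibleI_upper:
  assumes "\<psi> x = 1" and "\<psi> a \<noteq> 0" "\<psi> y \<noteq> 0" "y \<noteq> a"
    and "\<And>e. \<psi> e \<noteq> 0 \<Longrightarrow> e \<noteq> a \<Longrightarrow> e \<le> b \<and> a + b \<le> 2 * e"
    and "\<And>e. \<psi> e \<noteq> 0 \<Longrightarrow> e \<noteq> a \<Longrightarrow> 2 * e = a + b \<Longrightarrow> \<psi> b \<noteq> 0 \<Longrightarrow> \<psi> e = 1"
  shows "certified_irreducible \<psi>"
proof -
  have "upper_clustered \<psi> a"
    unfolding upper_clustered_def
  proof (intro conjI allI impI)
    fix e e' assume "\<psi> e \<noteq> 0" "\<psi> e' \<noteq> 0" "e \<noteq> a" "e' \<noteq> a"
    with assms(5)[of e] assms(5)[of e'] show "a + e' \<le> 2 * e" by linarith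
    assume "a + e' = 2 * e"
    with \<open>\<psi> e \<noteq> 0\<close> \<open>\<psi> e' \<noteq> 0\<close> \<open>e \<noteq> a\<close> \<open>e' \<noteq> a\<close>
      assms(5)[of e] assms(5)[of e'] assms(6)[of e]
    show "\<psi> e = 1" by (smt (verit))
  qed (fact assms(2))
  with assms(1-4) show ?thesis
    unfolding certified_irreducible_def by blast
qed

lemma certified_irreducibleI_lower:
  assumes "\<psi> x = 1" and "\<psi> a \<noteq> 0" "\<psi> y \<noteq> 0" "y \<noteq> a"
    and "\<And>e. \<psi> e \<noteq> 0 \<Longrightarrow> e \<noteq> a \<Longrightarrow> b \<le> e \<and> 2 * e \<le> b + a"
    and "\<And>e. \<psi> e \<noteq> 0 \<Longrightarrow> e \<noteq> a \<Longrightarrow> 2 * e = b + a \<Longrightarrow> \<psi> b \<noteq> 0 \<Longrightarrow> \<psi> e = 1"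
  shows "certified_irreducible \<psi>"
proof -
  have "lower_clustered \<psi> a"
    unfolding lower_clustered_def
  proof (intro conjI allI impI)
    fix e e' assume "\<psi> e \<noteq> 0" "\<psi> e' \<noteq> 0" "e \<noteq> a" "e' \<noteq> a"
    with assms(5)[of e] assms(5)[of e'] show "2 * e \<le> a + e'" by linarith
    assume "2 * e = a + e'"
    with \<open>\<psi> e \<noteq> 0\<close> \<open>\<psi> e' \<noteq> 0\<close> \<open>e \<noteq> a\<close> \<open>e' \<noteq> a\<close>
      assms(5)[of e] assms(5)[of e'] assms(6)[of e]
    show "\<psi> e = 1" by (smt (verit))
  qed (fact assms(2))
  with assms(1-4) show ?thesis
    unfolding certified_irreducible_def by blast
qed

lemma certified_irreducible_double_monomial:
  "certified_irreducible (\<lambda>e. if e = t then 2 else 0)"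
  unfolding certified_irreducible_def by blast

lemma irreducible_Abs_poly_mapping_clustered:
  assumes "finite {e. \<psi> e \<noteq> 0}"
    and "\<psi> x = 1" "y \<noteq> z" "\<psi> y \<noteq> 0" "\<psi> z \<noteq> 0"
    and clustered: "upper_clustered \<psi> a \<or> lower_clustered \<psi> a"
  shows "irreducible (Abs_poly_mapping \<psi> :: laurent_nat)"
proof -
  let ?g = "Abs_poly_mapping \<psi> :: laurent_nat"
  have lookup_g: "Poly_Mapping.lookup ?g = \<psi>"
    using assms(1) by (rule lookup_Abs_poly_mapping)
  have keys_g: "Poly_Mapping.keys ?g = {e. \<psi> e \<noteq> 0}"
    by (auto simp: in_keys_iff lookup_g)
  show ?thesis
  proof (rule irreducibleI_corner_pairs[where x = x and y = y and z = z])
    show "Poly_Mapping.lookup ?g x = 1" "y \<in> Poly_Mapping.keys ?g" "z \<in> Poly_Mapping.keys ?g"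
      "y \<noteq> z"
      using assms(2-5) by (simp_all add: lookup_g keys_g)
    fix p q r s
    assume keys: "p \<in> Poly_Mapping.keys ?g" "q \<in> Poly_Mapping.keys ?g"
        "r \<in> Poly_Mapping.keys ?g" "s \<in> Poly_Mapping.keys ?g"
      and bounds: "\<forall>e \<in> Poly_Mapping.keys ?g. p \<le> e \<and> e \<le> s"
      and order: "p < q" "p < r" "q < s" "r < s" "q + r = p + s"
    have "\<psi> p \<noteq> 0" "\<psi> q \<noteq> 0" "\<psi> r \<noteq> 0" "\<psi> s \<noteq> 0"
      using keys by (simp_all add: keys_g)
    moreover have "\<And>e. \<psi> e \<noteq> 0 \<Longrightarrow> p \<le> e" "\<And>e. \<psi> e \<noteq> 0 \<Longrightarrow> e \<le> s"
      using bounds by (simp_all add: keys_g)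
    ultimately have "q = r \<and> \<psi> q = 1"
      using clustered upper_clustered_corner_pairs[of \<psi> a p q r s]
        lower_clustered_corner_pairs[of \<psi> a p q r s] order by blast
    then show "q = r \<and> Poly_Mapping.lookup ?g q = 1"
      by (metis lookup_g)
  qed
qed

lemma irreducible_Abs_poly_mapping:
  assumes "finite {e. \<psi> e \<noteq> 0}" and "certified_irreducible \<psi>"
  shows "irreducible (Abs_poly_mapping \<psi> :: laurent_nat)"
proof -
  consider (clustered) x y z a where "\<psi> x = 1" "y \<noteq> z" "\<psi> y \<noteq> 0" "\<psi> z \<noteq> 0"
      "upper_clustered \<psi> a \<or> lower_clustered \<psi> a"
    | (double) t where "\<psi> = (\<lambda>e. if e = t then 2 else 0)"
    using assms(2) unfolding certified_irreducible_def by blast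
  then show ?thesis
  proof cases
    case clustered
    with assms(1) show ?thesis
      by (rule irreducible_Abs_poly_mapping_clustered)
  next
    case double
    then have "(Abs_poly_mapping \<psi> :: laurent_nat) = Poly_Mapping.single t 2"
      using assms(1) by (intro poly_mapping_eqI) (simp add: lookup_single when_def)
    moreover have "irreducible (2 :: nat)"
      using two_is_prime_nat by (blast intro: prime_elem_imp_irreducible prime_imp_prime_elem)
    ultimately show ?thesis
      by (simp add: irreducible_single)
  qed
qed

section \<open>Splitting the coefficients\<close>

definition has_certified_split :: "(int \<Rightarrow> nat) \<Rightarrow> bool" where
  "has_certified_split c \<longleftrightarrow>
    (\<exists>\<phi> \<le> c. certified_irreducible \<phi> \<and> certified_irreducible (c - \<phi>))"

context
  fixes c :: "int \<Rightarrow> nat" and m M :: int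
  assumes m_less_M: "m < M" and c_m: "0 < c m" and c_M: "0 < c M"
    and support: "\<And>e. 0 < c e \<Longrightarrow> m \<le> e \<and> e \<le> M"
    and total: "4 \<le> sum c {e. c e \<noteq> 0}"
begin

lemma four_le_sum_superset: "{e. c e \<noteq> 0} \<subseteq> T \<Longrightarrow> finite T \<Longrightarrow> 4 \<le> sum c T"
  using total sum_mono2[of T "{e. c e \<noteq> 0}" c] by simp

lemma inner_key_if_light_ends:
  assumes "c m + c M \<le> 3"
  obtains k where "m < k" "k < M" "0 < c k"
proof -
  have "\<exists>k. m < k \<and> k < M \<and> 0 < c k"
  proof (rule ccontr)
    assume no_inner: "\<not> ?thesis"
    have "{e. c e \<noteq> 0} \<subseteq> {m, M}"
    proof
      fix e assume "e \<in> {e. c e \<noteq> 0}"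
      with support[of e] no_inner show "e \<in> {m, M}"
        by (auto simp: le_less)
    qed
    then have "4 \<le> sum c {m, M}"
      by (rule four_le_sum_superset) simp
    with assms m_less_M show False
      by simp
  qed
  then show ?thesis
    using that by blast
qed

lemma split_if_heavy_centre:
  assumes "2 * z = m + M" and "2 \<le> c z"
  shows "has_certified_split c"
proof -
  define \<phi> where "\<phi> e = (if e = m then 1 else if 2 * e = m + M then c e - 1
    else if m + M < 2 * e \<and> e < M then c e else 0)" for e
  have "\<phi> \<le> c"
    using c_m by (auto simp: le_fun_def \<phi>_def)
  moreover have "certified_irreducible \<phi>"
    by (rule certified_irreducibleI_upper[of \<phi> m m z M])
      (use assms m_less_M in \<open>auto simp: \<phi>_def split: if_splits\<close>)
  moreover have "certified_irreducible (c - \<phi>)"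
    by (rule certified_irreducibleI_lower[of "c - \<phi>" z M z m])
      (use assms m_less_M c_M in \<open>auto simp: \<phi>_def split: if_splits dest: support\<close>)
  ultimately show ?thesis
    unfolding has_certified_split_def by blast
qed

lemma split_if_both_sides_heavy:
  assumes centre: "\<And>e. 2 * e = m + M \<Longrightarrow> c e \<le> 1"
    and upper: "2 \<le> c M \<or> (\<exists>u. 0 < c u \<and> m + M < 2 * u \<and> u < M)"
    and lower: "2 \<le> c m \<or> (\<exists>l. 0 < c l \<and> m < l \<and> 2 * l \<le> m + M)"
  shows "has_certified_split c"
proof -
  define \<phi> where "\<phi> e = (if e = m then 1 else if e = M then c M - 1
    else if m + M < 2 * e then c e else 0)" for e
  obtain y where y: "y \<noteq> m" "\<phi> y \<noteq> 0"
  proof (cases "2 \<le> c M")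
    case True
    with m_less_M that[of M] show ?thesis by (simp add: \<phi>_def)
  next
    case False
    with upper obtain u where "0 < c u" "m + M < 2 * u" "u < M" by auto
    with m_less_M that[of u] show ?thesis by (simp add: \<phi>_def)
  qed
  obtain y' where y': "y' \<noteq> M" "(c - \<phi>) y' \<noteq> 0"
  proof (cases "2 \<le> c m")
    case True
    with m_less_M that[of m] show ?thesis by (simp add: \<phi>_def)
  next
    case False
    with lower obtain l where "0 < c l" "m < l" "2 * l \<le> m + M" by auto
    with m_less_M that[of l] show ?thesis by (simp add: \<phi>_def)
  qed
  have "\<phi> \<le> c"
    using c_m by (auto simp: le_fun_def \<phi>_def)
  moreover have "certified_irreducible \<phi>"
    by (rule certified_irreducibleI_upper[of \<phi> m m y M])
      (use y m_less_M in \<open>auto simp: \<phi>_def split: if_splits dest: support\<close>)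
  moreover have "certified_irreducible (c - \<phi>)"
    by (rule certified_irreducibleI_lower[of "c - \<phi>" M M y' m])
      (use y' m_less_M c_M in \<open>auto simp: \<phi>_def split: if_splits dest: support centre\<close>)
  ultimately show ?thesis
    unfolding has_certified_split_def by blast
qed

lemma split_if_light_top:
  assumes centre: "\<And>e. 2 * e = m + M \<Longrightarrow> c e \<le> 1"
    and "c M = 1" and no_upper: "\<And>e. 0 < c e \<Longrightarrow> e < M \<Longrightarrow> 2 * e \<le> m + M"
    and "2 \<le> c m"
  shows "has_certified_split c"
proof -
  define \<phi> where "\<phi> = c(m := c m - 2)"
  have double: "c - \<phi> = (\<lambda>e. if e = m then 2 else 0)"
    using assms(4) by (auto simp: \<phi>_def)
  obtain y where y: "y \<noteq> M" "\<phi> y \<noteq> 0"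
  proof (cases "3 \<le> c m")
    case True
    with m_less_M that[of m] show ?thesis by (simp add: \<phi>_def)
  next
    case False
    with assms(2) obtain k where "m < k" "k < M" "0 < c k"
      by (auto intro: inner_key_if_light_ends)
    with that[of k] show ?thesis by (simp add: \<phi>_def)
  qed
  have "\<phi> \<le> c"
    by (simp add: le_fun_def \<phi>_def)
  moreover have "certified_irreducible \<phi>"
  proof (rule certified_irreducibleI_lower[of \<phi> M M y m])
    fix e assume "\<phi> e \<noteq> 0" and "e \<noteq> M"
    then have "e = m \<or> 0 < c e \<and> \<phi> e = c e"
      by (auto simp: \<phi>_def)
    with support[of e] no_upper[of e] \<open>e \<noteq> M\<close> m_less_M show "m \<le> e \<and> 2 * e \<le> m + M"
      by auto
    assume "2 * e = m + M"
    with centre[of e] \<open>\<phi> e \<noteq> 0\<close> \<open>e = m \<or> 0 < c e \<and> \<phi> e = c e\<close> m_less_M show "\<phi> e = 1"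
      by auto
  qed (use y m_less_M assms(2) in \<open>simp_all add: \<phi>_def\<close>)
  moreover have "certified_irreducible (c - \<phi>)"
    unfolding double by (rule certified_irreducible_double_monomial)
  ultimately show ?thesis
    unfolding has_certified_split_def by blast
qed

lemma split_if_light_bottom:
  assumes "c m = 1" and no_lower: "\<And>e. 0 < c e \<Longrightarrow> m < e \<Longrightarrow> m + M < 2 * e"
    and "2 \<le> c M"
  shows "has_certified_split c"
proof -
  define \<phi> where "\<phi> = c(M := c M - 2)"
  have double: "c - \<phi> = (\<lambda>e. if e = M then 2 else 0)"
    using assms(3) by (auto simp: \<phi>_def)
  obtain y where y: "y \<noteq> m" "\<phi> y \<noteq> 0"
  proof (cases "3 \<le> c M")
    case True
    with m_less_M that[of M] show ?thesis by (simp add: \<phi>_def)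
  next
    case False
    with assms(1) obtain k where "m < k" "k < M" "0 < c k"
      by (auto intro: inner_key_if_light_ends)
    with that[of k] show ?thesis by (simp add: \<phi>_def)
  qed
  have "\<phi> \<le> c"
    by (simp add: le_fun_def \<phi>_def)
  moreover have "certified_irreducible \<phi>"
  proof (rule certified_irreducibleI_upper[of \<phi> m m y M])
    fix e assume "\<phi> e \<noteq> 0" and "e \<noteq> m"
    then have "e = M \<or> 0 < c e"
      by (auto simp: \<phi>_def split: if_splits)
    with support[of e] no_lower[of e] \<open>e \<noteq> m\<close> m_less_M
    have "e \<le> M" "m + M < 2 * e"
      by auto
    then show "e \<le> M \<and> m + M \<le> 2 * e" and "2 * e = m + M \<Longrightarrow> \<phi> e = 1"
      by auto
  qed (use y m_less_M assms(1) in \<open>simp_all add: \<phi>_def\<close>)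
  moreover have "certified_irreducible (c - \<phi>)"
    unfolding double by (rule certified_irreducible_double_monomial)
  ultimately show ?thesis
    unfolding has_certified_split_def by blast
qed

lemma split_if_three_keys:
  assumes "c m = 1" "c M = 1" and "m < k" "k < M"
    and three_keys: "\<And>e. 0 < c e \<Longrightarrow> e = m \<or> e = k \<or> e = M"
  shows "has_certified_split c"
proof -
  have "{e. c e \<noteq> 0} \<subseteq> {m, k, M}"
    using three_keys by auto
  then have "4 \<le> sum c {m, k, M}"
    by (rule four_le_sum_superset) simp
  with assms(1-4) have "2 \<le> c k"
    by simp
  define \<phi> where "\<phi> e = (if e = m then 1 else if e = k then c k - 1 else 0)" for e
  have "\<phi> \<le> c"
    using assms(1) by (auto simp: le_fun_def \<phi>_def)
  moreover have "certified_irreducible \<phi>"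
    by (rule certified_irreducibleI_upper[of \<phi> m m k k])
      (use \<open>2 \<le> c k\<close> \<open>m < k\<close> in \<open>auto simp: \<phi>_def split: if_splits\<close>)
  moreover have "certified_irreducible (c - \<phi>)"
  proof (rule certified_irreducibleI_upper[of "c - \<phi>" k k M M])
    fix e assume "(c - \<phi>) e \<noteq> 0" and "e \<noteq> k"
    with three_keys[of e] assms(1) have "e = M"
      by (auto simp: \<phi>_def split: if_splits)
    with \<open>k < M\<close> show "e \<le> M \<and> k + M \<le> 2 * e" and "2 * e = k + M \<Longrightarrow> (c - \<phi>) e = 1"
      by auto
  qed (use assms \<open>2 \<le> c k\<close> in \<open>auto simp: \<phi>_def\<close>)
  ultimately show ?thesis
    unfolding has_certified_split_def by blast
qed

lemma split_if_light_ends_no_upper: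
  assumes "c m = 1" "c M = 1" and no_upper: "\<And>e. 0 < c e \<Longrightarrow> e < M \<Longrightarrow> 2 * e \<le> m + M"
    and "m < k" "k < M" "0 < c k" and "m < k'" "k' < M" "0 < c k'" "k \<noteq> k'"
  shows "has_certified_split c"
proof -
  define \<phi> where "\<phi> e = (if e = m then 1 else if e = k then c k else 0)" for e
  have "\<phi> \<le> c"
    using assms(1) by (auto simp: le_fun_def \<phi>_def)
  moreover have "certified_irreducible \<phi>"
    by (rule certified_irreducibleI_upper[of \<phi> m m k k])
      (use assms in \<open>auto simp: \<phi>_def split: if_splits\<close>)
  moreover have "certified_irreducible (c - \<phi>)"
  proof (rule certified_irreducibleI_lower[of "c - \<phi>" M M k' m])
    fix e assume "(c - \<phi>) e \<noteq> 0" and "e \<noteq> M"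
    with assms(1) have "0 < c e"
      by (auto simp: \<phi>_def split: if_splits)
    with support[of e] no_upper[of e] \<open>e \<noteq> M\<close> show "m \<le> e \<and> 2 * e \<le> m + M"
      by auto
  qed (use assms in \<open>auto simp: \<phi>_def\<close>)
  ultimately show ?thesis
    unfolding has_certified_split_def by blast
qed

lemma split_if_light_ends_no_lower:
  assumes "c m = 1" "c M = 1" and no_lower: "\<And>e. 0 < c e \<Longrightarrow> m < e \<Longrightarrow> m + M < 2 * e"
    and "m < k" "k < M" "0 < c k" and "m < k'" "k' < M" "0 < c k'" "k \<noteq> k'"
  shows "has_certified_split c"
proof -
  define \<phi> where "\<phi> e = (if e = M then 1 else if e = k then c k else 0)" for e
  have "\<phi> \<le> c"
    using assms(2) by (auto simp: le_fun_def \<phi>_def)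
  moreover have "certified_irreducible \<phi>"
    by (rule certified_irreducibleI_lower[of \<phi> M M k k])
      (use assms in \<open>auto simp: \<phi>_def split: if_splits\<close>)
  moreover have "certified_irreducible (c - \<phi>)"
  proof (rule certified_irreducibleI_upper[of "c - \<phi>" m m k' M])
    fix e assume "(c - \<phi>) e \<noteq> 0" and "e \<noteq> m"
    with assms(2) have "0 < c e"
      by (auto simp: \<phi>_def split: if_splits)
    with support[of e] no_lower[of e] \<open>e \<noteq> m\<close> show "e \<le> M \<and> m + M \<le> 2 * e"
      by auto
  qed (use assms m_less_M in \<open>auto simp: \<phi>_def\<close>)
  ultimately show ?thesis
    unfolding has_certified_split_def by blast
qed

lemma split_if_light_ends:
  assumes "c m = 1" "c M = 1"
    and one_side_empty: "(\<forall>e. 0 < c e \<longrightarrow> e < M \<longrightarrow> 2 * e \<le> m + M)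
      \<or> (\<forall>e. 0 < c e \<longrightarrow> m < e \<longrightarrow> m + M < 2 * e)"
  shows "has_certified_split c"
proof -
  obtain k where k: "m < k" "k < M" "0 < c k"
    using assms(1,2) inner_key_if_light_ends by auto
  show ?thesis
  proof (cases "\<forall>e. 0 < c e \<longrightarrow> e = m \<or> e = k \<or> e = M")
    case True
    with assms(1,2) k show ?thesis
      by (blast intro: split_if_three_keys)
  next
    case False
    then obtain k' where "0 < c k'" "k' \<noteq> m" "k' \<noteq> k" "k' \<noteq> M"
      by blast
    with support[of k'] have k': "m < k'" "k' < M" "0 < c k'" "k \<noteq> k'"
      by auto
    from one_side_empty show ?thesis
      using split_if_light_ends_no_upper[OF assms(1,2) _ k k']
        split_if_light_ends_no_lower[OF assms(1,2) _ k k']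
      by blast
  qed
qed

lemma split_if_light_side:
  assumes centre: "\<And>e. 2 * e = m + M \<Longrightarrow> c e \<le> 1"
    and light_side: "c M = 1 \<and> (\<forall>e. 0 < c e \<longrightarrow> e < M \<longrightarrow> 2 * e \<le> m + M)
      \<or> c m = 1 \<and> (\<forall>e. 0 < c e \<longrightarrow> m < e \<longrightarrow> m + M < 2 * e)"
  shows "has_certified_split c"
  using light_side
proof (elim disjE conjE)
  assume light_top: "c M = 1" "\<forall>e. 0 < c e \<longrightarrow> e < M \<longrightarrow> 2 * e \<le> m + M"
  show ?thesis
  proof (cases "2 \<le> c m")
    case True
    with centre light_top show ?thesis
      by (blast intro: split_if_light_top)
  next
    case False
    with c_m light_top show ?thesis
      by (auto intro: split_if_light_ends)
  qed
next
  assume light_bottom: "c m = 1" "\<forall>e. 0 < c e \<longrightarrow> m < e \<longrightarrow> m + M < 2 * e"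
  show ?thesis
  proof (cases "2 \<le> c M")
    case True
    with light_bottom show ?thesis
      by (blast intro: split_if_light_bottom)
  next
    case False
    with c_M light_bottom show ?thesis
      by (auto intro: split_if_light_ends)
  qed
qed

lemma certified_split_exists: "has_certified_split c"
proof (cases "\<exists>z. 2 * z = m + M \<and> 2 \<le> c z")
  case True
  then show ?thesis
    using split_if_heavy_centre by blast
next
  case False
  then have centre: "\<And>e. 2 * e = m + M \<Longrightarrow> c e \<le> 1"
    by force
  show ?thesis
  proof (cases "(2 \<le> c M \<or> (\<exists>u. 0 < c u \<and> m + M < 2 * u \<and> u < M))
      \<and> (2 \<le> c m \<or> (\<exists>l. 0 < c l \<and> m < l \<and> 2 * l \<le> m + M))")
    case True
    then show ?thesis
      using split_if_both_sides_heavy[OF centre] by blast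
  next
    case False
    have "c M = 1 \<and> (\<forall>e. 0 < c e \<longrightarrow> e < M \<longrightarrow> 2 * e \<le> m + M)"
      if "\<not> (2 \<le> c M \<or> (\<exists>u. 0 < c u \<and> m + M < 2 * u \<and> u < M))"
      using that c_M by (fastforce simp: not_less)
    moreover have "c m = 1 \<and> (\<forall>e. 0 < c e \<longrightarrow> m < e \<longrightarrow> m + M < 2 * e)"
      if "\<not> (2 \<le> c m \<or> (\<exists>l. 0 < c l \<and> m < l \<and> 2 * l \<le> m + M))"
      using that c_m by (fastforce simp: not_less)
    ultimately show ?thesis
      using False split_if_light_side[OF centre] by blast
  qed
qed

end

lemma has_certified_split_lookup:
  fixes f :: laurent_nat
  assumes "3 < eval_one f" and "1 < card (Poly_Mapping.keys f)"
  shows "has_certified_split (Poly_Mapping.lookup f)"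
proof -
  let ?K = "Poly_Mapping.keys f"
  define m where "m = Min ?K"
  define M where "M = Max ?K"
  have "?K \<noteq> {}"
    using assms(2) by auto
  then have ends: "m \<in> ?K" "M \<in> ?K" and support: "\<And>e. e \<in> ?K \<Longrightarrow> m \<le> e \<and> e \<le> M"
    by (simp_all add: m_def M_def)
  have "m < M"
  proof (rule ccontr)
    assume "\<not> m < M"
    with support have "?K \<subseteq> {m}"
      by fastforce
    then have "card ?K \<le> 1"
      using card_mono[of "{m}" ?K] by simp
    with assms(2) show False
      by simp
  qed
  moreover have "4 \<le> sum (Poly_Mapping.lookup f) {e. Poly_Mapping.lookup f e \<noteq> 0}"
    using assms(1) by (simp add: eval_one_def keys_def)
  ultimately show ?thesis
    using ends support
    by (intro certified_split_exists[where m = m and M = M]) (auto simp: in_keys_iff)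
qed

lemma sum_of_irreducibles_if_has_certified_split:
  fixes f :: laurent_nat
  assumes "has_certified_split (Poly_Mapping.lookup f)"
  shows "\<exists>g h. f = g + h \<and> irreducible g \<and> irreducible h"
proof -
  obtain \<phi> where le: "\<phi> \<le> Poly_Mapping.lookup f" and irreducible_parts:
    "certified_irreducible \<phi>" "certified_irreducible (Poly_Mapping.lookup f - \<phi>)"
    using assms unfolding has_certified_split_def by blast
  have "{e. \<phi> e \<noteq> 0} \<subseteq> Poly_Mapping.keys f"
  proof
    fix e assume "e \<in> {e. \<phi> e \<noteq> 0}"
    with le_funD[OF le, of e] show "e \<in> Poly_Mapping.keys f"
      by (simp add: in_keys_iff)
  qed
  moreover have "{e. (Poly_Mapping.lookup f - \<phi>) e \<noteq> 0} \<subseteq> Poly_Mapping.keys f"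
    by (auto simp: in_keys_iff)
  ultimately have finite_parts:
      "finite {e. \<phi> e \<noteq> 0}" "finite {e. (Poly_Mapping.lookup f - \<phi>) e \<noteq> 0}"
    by (auto intro: finite_subset)
  then have "f = Abs_poly_mapping \<phi> + Abs_poly_mapping (Poly_Mapping.lookup f - \<phi>)"
    using le by (intro poly_mapping_eqI) (simp add: lookup_add le_fun_def)
  with irreducible_parts show ?thesis
    using irreducible_Abs_poly_mapping finite_parts by blast
qed

theorem theorem1p1:
  fixes f :: laurent_nat
  assumes "eval_one f > 3" and "card (Poly_Mapping.keys f) > 1"
  shows "\<exists>g h :: laurent_nat. f = g + h \<and> irreducible g \<and> irreducible h"
  using assms by (intro sum_of_irreducibles_if_has_certified_split has_certified_split_lookup)

end
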